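(* Let $\mu>0$, $1<\alpha\le e^2$, $f(x)=xe^{-x}$, and let $\beta\in L^\infty_+(0,+\infty)$ satisfy $\int_0^{\infty}\beta(a)e^{-\mu a}\,da=1$. Let $\bar u(a)=\ln(\alpha)e^{-\mu a}$ be the positive equilibrium, $a^\star=\sup\{a>0:\int_a^\infty\beta(\sigma)e^{-\mu\sigma}\,d\sigma>0\}$, $\gamma(a)=\int_a^\infty\beta(\sigma)e^{-\mu\sigma}\,d\sigma$, $g(x)=(x-1)^2$, and $$V(u(t,\cdot))=\int_0^\infty\gamma(a)\,g\Big(\frac{u(t,a)}{\bar u(a)}\Big)\,da.$$ Assume $t\mapsto u(t,\cdot)$, $t\in\mathbb R$, is a complete orbit of the semiflow generated by $\partial_tu+\partial_au=-\mu u$, $u(t,0)=\alpha f(\int_0^\infty\beta(a)u(t,a)\,da)$, satisfying $\gamma_-\le\int_0^{a^\star}u(t,a)\,da\le\gamma_+$ for all $t\in\mathbb R$, for some $\gamma_+>\gamma_->0$. Then $t\mapsto V(u(t,\cdot))$ is non-increasing. Moreover, $t\mapsto V(u(t,\cdot))$ is constant if and only if $u(t,a)=\bar u(a)$ for all $t\in\mathbb R$.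
   Context: A complete orbit is a map $t\mapsto u(t,\cdot)\in L^1_+(0,\infty)$ defined for all $t\in\mathbb R$ with $U(s)u(t,\cdot)=u(t+s,\cdot)$ for $s\ge0$, where $U$ is the semiflow of the model in the integrated sense: $U(s)u_0(a)=e^{-\mu s}u_0(a-s)$ for $a\ge s$, $e^{-\mu a}b(s-a)$ for $a\le s$, with $b$ the continuous solution of $b(s)=\alpha f\big(\int_s^\infty\beta(a)e^{-\mu s}u_0(a-s)\,da+\int_0^s\beta(a)e^{-\mu a}b(s-a)\,da\big)$. *)

theory Defs
  imports "HOL-Analysis.Analysis"
begin

definition f_ricker :: "real \<Rightarrow> real" where
  "f_ricker x = x * exp (- x)"

definition gamma_fun :: "(real \<Rightarrow> real) \<Rightarrow> real \<Rightarrow> real \<Rightarrow> real" where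
  "gamma_fun \<beta> \<mu> a = (LBINT \<sigma>:{a..}. \<beta> \<sigma> * exp (- \<mu> * \<sigma>))"

definition astar :: "(real \<Rightarrow> real) \<Rightarrow> real \<Rightarrow> ereal" where
  "astar \<beta> \<mu> = Sup (ereal ` {a. 0 < a \<and> gamma_fun \<beta> \<mu> a > 0})"

definition ubar :: "real \<Rightarrow> real \<Rightarrow> real \<Rightarrow> real" where
  "ubar \<alpha> \<mu> a = ln \<alpha> * exp (- \<mu> * a)"

definition g_fun :: "real \<Rightarrow> real" where
  "g_fun x = (x - 1)\<^sup>2"

definition V_fun :: "(real \<Rightarrow> real) \<Rightarrow> real \<Rightarrow> real \<Rightarrow> (real \<Rightarrow> real) \<Rightarrow> ennreal" where
  "V_fun \<beta> \<mu> \<alpha> v =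
     (\<integral>\<^sup>+ a. ennreal (gamma_fun \<beta> \<mu> a * g_fun (v a / ubar \<alpha> \<mu> a)) * indicator {0<..} a \<partial>lborel)"

text \<open>Integrated semiflow: U(s) v0 = w, where b is a continuous solution of the
  renewal (Volterra) equation on [0,s]; equality in L^1(0,infinity), i.e. a.e.\<close>
definition semiflow_step ::
  "(real \<Rightarrow> real) \<Rightarrow> real \<Rightarrow> real \<Rightarrow> real \<Rightarrow> (real \<Rightarrow> real) \<Rightarrow> (real \<Rightarrow> real) \<Rightarrow> bool" where
  "semiflow_step \<beta> \<mu> \<alpha> s v0 w \<longleftrightarrow>
     (\<exists>b. continuous_on {0..s} b \<and>
        (\<forall>\<tau>\<in>{0..s}. b \<tau> = \<alpha> * f_ricker
            ((LBINT a:{\<tau>..}. \<beta> a * exp (- \<mu> * \<tau>) * v0 (a - \<tau>))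
             + (LBINT a:{0..\<tau>}. \<beta> a * exp (- \<mu> * a) * b (\<tau> - a)))) \<and>
        (AE a in lborel. 0 < a \<longrightarrow>
            w a = (if s \<le> a then exp (- \<mu> * s) * v0 (a - s) else exp (- \<mu> * a) * b (s - a))))"

definition complete_orbit :: "(real \<Rightarrow> real) \<Rightarrow> real \<Rightarrow> real \<Rightarrow> (real \<Rightarrow> real \<Rightarrow> real) \<Rightarrow> bool" where
  "complete_orbit \<beta> \<mu> \<alpha> u \<longleftrightarrow>
     (\<forall>t. set_integrable lborel {0<..} (u t) \<and> (AE a in lborel. 0 < a \<longrightarrow> 0 \<le> u t a)) \<and>
     (\<forall>t s. 0 \<le> s \<longrightarrow> semiflow_step \<beta> \<mu> \<alpha> s (u t) (u (t + s)))"

end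

theory Submission
  imports Defs "HOL-Probability.Distributions"
begin

text \<open>Along a complete orbit the age profile is carried by one continuous birth function,
  u(t, a) = e^(-mu a) b(t - a), and b solves the renewal equation
  b(r) = alpha f(int k(s) b(r - s) ds) with the probability kernel k(s) = beta(s) e^(-mu s).
  In units of the equilibrium birth rate ln alpha this reads B = h(k * B) with
  h(x) = x e^(ln alpha (1 - x)). Fubini turns V into int k(s) int_(t-s)^t G ds with G = g(B),
  so V(t + s) - V(t) = int_t^(t+s) (G - k * G). Jensen's inequality gives g(k * B) <= k * G,
  and ln alpha <= 2 gives g(h(x)) <= g(x) with equality only for x in {0, 1}; hence
  G <= k * G and V is non-increasing. If V is constant then G = k * G almost everywhere,
  which forces B(B - 1) = 0; by continuity B is constantly 0 or 1, and the lower bound on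
  the population excludes 0.\<close>

section \<open>The normalized Ricker map\<close>

\<comment> \<open>The estimate that makes \<open>ln \<alpha> \<le> 2\<close> sufficient for \<open>g (h x) < g x\<close>.\<close>
lemma one_minus_mult_exp_double_less:
  fixes y :: real
  assumes y: "0 < y" "y < 1"
  shows "(1 - y) * exp (2 * y) < 1 + y"
proof -
  define \<psi> where "\<psi> z = ln (1 + z) - ln (1 - z) - 2 * z" for z :: real
  have "\<psi> 0 < \<psi> y"
  proof (rule DERIV_pos_imp_increasing_open[OF y(1)])
    fix z :: real
    assume z: "0 < z" "z < y"
    have "(\<psi> has_real_derivative (1 / (1 + z) + 1 / (1 - z) - 2)) (at z)"
      unfolding \<psi>_def using z y by (auto intro!: derivative_eq_intros)
    moreover have "1 - z < 1 / (1 + z)" "1 + z < 1 / (1 - z)"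
      using z y by (simp_all add: field_simps)
    ultimately show "\<exists>l. (\<psi> has_real_derivative l) (at z) \<and> 0 < l"
      by (intro exI[of _ "1 / (1 + z) + 1 / (1 - z) - 2"]) auto
  next
    show "continuous_on {0..y} \<psi>"
      unfolding \<psi>_def using y by (intro continuous_intros) auto
  qed
  then have "exp (2 * y) < exp (ln (1 + y) - ln (1 - y))"
    by (simp add: \<psi>_def)
  also have "\<dots> = (1 + y) / (1 - y)"
    using y by (simp add: exp_diff)
  finally show ?thesis
    using y by (simp add: field_simps)
qed

definition normalized_ricker :: "real \<Rightarrow> real \<Rightarrow> real" where
  "normalized_ricker L x = x * exp (L * (1 - x))"

lemma alpha_f_ricker_eq_normalized_ricker:
  assumes "0 < \<alpha>"
  shows "\<alpha> * f_ricker (ln \<alpha> * x) = ln \<alpha> * normalized_ricker (ln \<alpha>) x"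
proof -
  have "exp (ln \<alpha> * (1 - x)) = exp (ln \<alpha>) * exp (- (ln \<alpha> * x))"
    by (simp add: algebra_simps flip: exp_add)
  then have "\<alpha> * exp (- (ln \<alpha> * x)) = exp (ln \<alpha> * (1 - x))"
    using assms by simp
  then show ?thesis
    unfolding f_ricker_def normalized_ricker_def by (metis mult.left_commute mult.assoc)
qed

lemma normalized_ricker_bounds_gt_one:
  assumes L: "0 < L" "L \<le> 2" and x: "1 < x"
  shows "2 - x < normalized_ricker L x" and "normalized_ricker L x < x"
proof -
  have "exp (L * (1 - x)) < 1"
    using x L by (simp add: mult_pos_neg)
  then show "normalized_ricker L x < x"
    unfolding normalized_ricker_def using x by simp
  show "2 - x < normalized_ricker L x"
  proof (cases "2 \<le> x")
    case True
    have "0 < x * exp (L * (1 - x))"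
      using x by simp
    then show ?thesis
      unfolding normalized_ricker_def using True by linarith
  next
    case False
    define y where "y = x - 1"
    have y: "0 < y" "y < 1"
      using x False unfolding y_def by auto
    have "2 * (1 - x) \<le> L * (1 - x)"
      using L x by (intro mult_right_mono_neg) auto
    then have "exp (- 2 * y) \<le> exp (L * (1 - x))"
      unfolding y_def by simp
    moreover have "1 - y < (1 + y) * exp (- 2 * y)"
      using one_minus_mult_exp_double_less[OF y] by (simp add: exp_minus field_simps)
    ultimately have "1 - y < (1 + y) * exp (L * (1 - x))"
      using y by (smt (verit) mult_left_mono)
    then show ?thesis
      unfolding normalized_ricker_def y_def by simp
  qed
qed

lemma normalized_ricker_bounds_lt_one:
  assumes L: "0 < L" "L \<le> 2" and x: "0 < x" "x < 1"
  shows "x < normalized_ricker L x" and "normalized_ricker L x < 2 - x"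
proof -
  have "1 < exp (L * (1 - x))"
    using x L by simp
  then show "x < normalized_ricker L x"
    unfolding normalized_ricker_def using x by simp
  define y where "y = 1 - x"
  have y: "0 < y" "y < 1"
    using x unfolding y_def by auto
  have "L * (1 - x) \<le> 2 * (1 - x)"
    using L x by (intro mult_right_mono) auto
  then have "exp (L * (1 - x)) \<le> exp (2 * y)"
    unfolding y_def by simp
  then have "normalized_ricker L x \<le> (1 - y) * exp (2 * y)"
    unfolding normalized_ricker_def y_def using x by (simp add: mult_left_mono)
  also have "\<dots> < 1 + y"
    by (rule one_minus_mult_exp_double_less[OF y])
  finally show "normalized_ricker L x < 2 - x"
    unfolding y_def by simp
qed

lemma g_fun_normalized_ricker_less:
  fixes L x :: real
  assumes L: "0 < L" "L \<le> 2" and x: "0 \<le> x" "x \<noteq> 0" "x \<noteq> 1"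
  shows "g_fun (normalized_ricker L x) < g_fun x"
proof -
  define h where "h = normalized_ricker L x"
  have "0 < (x - h) * (x + h - 2)"
  proof (cases "1 < x")
    case True
    then show ?thesis
      using normalized_ricker_bounds_gt_one[OF L True] unfolding h_def by simp
  next
    case False
    then have "0 < x" "x < 1"
      using x by auto
    then have "x - h < 0" "x + h - 2 < 0"
      using normalized_ricker_bounds_lt_one[OF L \<open>0 < x\<close> \<open>x < 1\<close>] unfolding h_def by auto
    then show ?thesis
      by (simp add: mult_neg_neg)
  qed
  moreover have "g_fun x - g_fun h = (x - h) * (x + h - 2)"
    unfolding g_fun_def by (simp add: power2_eq_square algebra_simps)
  ultimately show ?thesis
    unfolding h_def by simp
qed

lemma g_fun_normalized_ricker_le:
  fixes L x :: real
  assumes "0 < L" "L \<le> 2" "0 \<le> x"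
  shows "g_fun (normalized_ricker L x) \<le> g_fun x"
  using g_fun_normalized_ricker_less[OF assms]
  by (cases "x = 0 \<or> x = 1") (auto simp: normalized_ricker_def)

lemma f_ricker_le: "f_ricker y \<le> exp (- 1)"
proof -
  have "y \<le> exp (y - 1)"
    using exp_ge_add_one_self[of "y - 1"] by simp
  then show ?thesis
    unfolding f_ricker_def by (simp add: exp_diff exp_minus field_simps)
qed

section \<open>Lebesgue measure on the line\<close>

lemma AE_lborel_translate:
  assumes "AE x in lborel. P x"
  shows "AE x in lborel. P (x - d :: real)"
proof -
  obtain N where N: "{x. \<not> P x} \<subseteq> N" "N \<in> null_sets lborel"
  proof -
    from assms obtain N where "{x \<in> space lborel. \<not> P x} \<subseteq> N" "emeasure lborel N = 0" "N \<in> sets lborel"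
      by (rule AE_E)
    then show ?thesis using that[of N] by (simp add: null_setsI)
  qed
  have "{x. x - d \<in> N} \<in> null_sets lborel"
    using null_sets_translation[OF N(2)] .
  then show ?thesis
    by (rule AE_I') (use N in auto)
qed

lemma AE_lborel_if_AE_bounded:
  assumes "\<And>n::nat. AE x in lborel. \<bar>x\<bar> < real n \<longrightarrow> P x"
  shows "AE x in lborel. P x"
proof -
  have "AE x in lborel. \<forall>n::nat. \<bar>x\<bar> < real n \<longrightarrow> P x"
    using assms by (subst AE_all_countable) blast
  then show ?thesis
    by eventually_elim (meson reals_Archimedean2)
qed

lemma continuous_on_AE_eq_imp_eq:
  fixes p q :: "real \<Rightarrow> real"
  assumes S: "open S" and "continuous_on S p" "continuous_on S q"
    and ae: "AE x in lborel. x \<in> S \<longrightarrow> p x = q x" and x0: "x0 \<in> S"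
  shows "p x0 = q x0"
proof (rule ccontr)
  assume "p x0 \<noteq> q x0"
  have "continuous_on S (\<lambda>x. p x - q x)"
    using assms by (intro continuous_intros)
  then have "open (S \<inter> (\<lambda>x. p x - q x) -` (- {0}))"
    using S by (rule continuous_open_preimage) auto
  moreover have "x0 \<in> S \<inter> (\<lambda>x. p x - q x) -` (- {0})"
    using x0 \<open>p x0 \<noteq> q x0\<close> by auto
  ultimately obtain e where e: "0 < e" "ball x0 e \<subseteq> S \<inter> (\<lambda>x. p x - q x) -` (- {0})"
    by (meson openE)
  then have sub: "{x0 - e<..<x0 + e} \<subseteq> {x \<in> S. p x \<noteq> q x}"
    by (force simp: ball_def dist_real_def)
  have "AE x in lborel. x \<notin> {x0 - e<..<x0 + e}"
    using ae by eventually_elim (use sub in auto)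
  then have "emeasure lborel {x0 - e<..<x0 + e} = 0"
    by (subst (asm) AE_iff_measurable[of "{x0 - e<..<x0 + e}"]) auto
  then show False using e(1) by simp
qed

lemma nn_integral_mult_exp_neg_finite:
  fixes \<mu> :: real
  assumes mu: "0 < \<mu>"
  shows "(\<integral>\<^sup>+ \<sigma>. ennreal (\<sigma> * exp (- \<mu> * \<sigma>)) * indicator {0<..} \<sigma> \<partial>lborel) \<noteq> \<infinity>"
proof -
  \<comment> \<open>Substituting \<open>x = 0 + \<mu> * \<sigma>\<close> (in the shape of \<open>nn_integral_real_affine\<close>) reduces
    the claim to the Gamma integral of \<open>x * exp (- x)\<close>.\<close>
  define Y where "Y = (\<integral>\<^sup>+ \<sigma>. ennreal ((0 + \<mu> * \<sigma>) ^ 1 * exp (- (0 + \<mu> * \<sigma>)))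
    * indicator {0..} (0 + \<mu> * \<sigma>) \<partial>lborel)"
  have "(\<integral>\<^sup>+ x. ennreal (x ^ 1 * exp (- x)) * indicator {0..} x \<partial>lborel) = ennreal \<bar>\<mu>\<bar> * Y"
    unfolding Y_def by (rule nn_integral_real_affine) (use mu in auto)
  then have "ennreal \<mu> * Y = 1"
    using nn_intergal_power_times_exp_Ici[of 1] mu by simp
  then have Y: "Y \<noteq> \<infinity>"
    using mu by (auto simp: ennreal_mult_eq_top_iff)
  have "(\<integral>\<^sup>+ \<sigma>. ennreal (\<sigma> * exp (- \<mu> * \<sigma>)) * indicator {0<..} \<sigma> \<partial>lborel)
     \<le> (\<integral>\<^sup>+ \<sigma>. ennreal (1 / \<mu>) * (ennreal ((0 + \<mu> * \<sigma>) ^ 1 * exp (- (0 + \<mu> * \<sigma>)))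
          * indicator {0..} (0 + \<mu> * \<sigma>)) \<partial>lborel)"
  proof (intro nn_integral_mono)
    fix \<sigma> :: real
    show "ennreal (\<sigma> * exp (- \<mu> * \<sigma>)) * indicator {0<..} \<sigma>
      \<le> ennreal (1 / \<mu>) * (ennreal ((0 + \<mu> * \<sigma>) ^ 1 * exp (- (0 + \<mu> * \<sigma>)))
          * indicator {0..} (0 + \<mu> * \<sigma>))"
      using mu by (cases "0 < \<sigma>") (auto simp: ennreal_mult[symmetric])
  qed
  also have "\<dots> = ennreal (1 / \<mu>) * Y"
    unfolding Y_def by (rule nn_integral_cmult) measurable
  finally show ?thesis
    using Y by (metis ennreal_mult_eq_top_iff ennreal_neq_top infinity_ennreal_def neq_top_trans)
qed

section \<open>The net maternity kernel\<close>

locale age_kernel =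
  fixes \<beta> :: "real \<Rightarrow> real" and \<mu> M :: real
  assumes mu_pos: "0 < \<mu>"
    and beta_measurable [measurable]: "\<beta> \<in> borel_measurable borel"
    and beta_bounds: "AE a in lborel. 0 < a \<longrightarrow> 0 \<le> \<beta> a \<and> \<beta> a \<le> M"
    and integral_kernel: "(LBINT a:{0<..}. \<beta> a * exp (- \<mu> * a)) = 1"
begin

definition k :: "real \<Rightarrow> real" where
  "k \<sigma> = \<beta> \<sigma> * exp (- \<mu> * \<sigma>)"

lemma k_measurable [measurable]: "k \<in> borel_measurable borel"
  unfolding k_def by measurable

lemma set_integral_k: "(LBINT \<sigma>:{0<..}. k \<sigma>) = 1"
  using integral_kernel by (simp add: k_def)

lemma set_integrable_k: "set_integrable lborel {0<..} k"
  using set_integral_k not_integrable_integral_eq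
  unfolding set_lebesgue_integral_def set_integrable_def by fastforce

lemma AE_k_nonneg: "AE \<sigma> in lborel. 0 < \<sigma> \<longrightarrow> 0 \<le> k \<sigma>"
  using beta_bounds by eventually_elim (auto simp: k_def)

lemma set_integrable_k_mult:
  assumes bound: "\<And>a. \<bar>\<phi> a\<bar> \<le> C" and [measurable]: "\<phi> \<in> borel_measurable borel"
    and [measurable]: "A \<in> sets borel" and "A \<subseteq> {0<..}"
  shows "set_integrable lborel A (\<lambda>a. k a * \<phi> a)"
proof (rule set_integrable_bound)
  have "set_integrable lborel A k"
    by (rule set_integrable_subset[OF set_integrable_k]) (use assms in auto)
  then show "set_integrable lborel A (\<lambda>a. C * k a)"
    by (rule set_integrable_mult_right)
  show "set_borel_measurable lborel A (\<lambda>a. k a * \<phi> a)"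
    unfolding set_borel_measurable_def by measurable
  show "AE a in lborel. a \<in> A \<longrightarrow> norm (k a * \<phi> a) \<le> norm (C * k a)"
  proof (intro AE_I2 impI)
    fix a
    have "\<bar>k a\<bar> * \<bar>\<phi> a\<bar> \<le> \<bar>k a\<bar> * C"
      using bound by (intro mult_left_mono) auto
    moreover have "0 \<le> C"
      using bound[of 0] by linarith
    ultimately show "norm (k a * \<phi> a) \<le> norm (C * k a)"
      by (simp add: abs_mult mult.commute)
  qed
qed

lemma set_integral_k_mult_nonneg:
  assumes "\<And>a. 0 \<le> \<phi> a"
  shows "0 \<le> (LBINT a:{0<..}. k a * \<phi> a)"
  unfolding set_lebesgue_integral_def
  by (rule integral_nonneg_AE)
    (use AE_k_nonneg assms in \<open>auto simp: indicator_def elim!: eventually_mono\<close>)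

lemma square_set_integral_k_mult_le:
  assumes bound: "\<And>a. \<bar>\<phi> a\<bar> \<le> C" and [measurable]: "\<phi> \<in> borel_measurable borel"
  shows "(LBINT a:{0<..}. k a * \<phi> a)\<^sup>2 \<le> (LBINT a:{0<..}. k a * (\<phi> a)\<^sup>2)"
proof -
  define x where "x = (LBINT a:{0<..}. k a * \<phi> a)"
  have int: "set_integrable lborel {0<..} (\<lambda>a. k a * \<phi> a)"
    by (rule set_integrable_k_mult[OF bound]) auto
  have "\<bar>\<phi> a\<bar>\<^sup>2 \<le> C\<^sup>2" for a
    using bound[of a] by (intro power_mono) auto
  then have "\<bar>(\<phi> a)\<^sup>2\<bar> \<le> C\<^sup>2" for a
    by simp
  then have int_sq: "set_integrable lborel {0<..} (\<lambda>a. k a * (\<phi> a)\<^sup>2)"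
    by (rule set_integrable_k_mult) auto
  have "(\<lambda>a. k a * (\<phi> a - x)\<^sup>2) = (\<lambda>a. (k a * (\<phi> a)\<^sup>2 - 2 * x * (k a * \<phi> a)) + x\<^sup>2 * k a)"
    by (auto simp: fun_eq_iff power2_eq_square algebra_simps)
  then have "(LBINT a:{0<..}. k a * (\<phi> a - x)\<^sup>2)
      = (LBINT a:{0<..}. k a * (\<phi> a)\<^sup>2) - 2 * x * x + x\<^sup>2 * 1"
    using int int_sq set_integrable_k unfolding x_def set_integral_k[symmetric]
    by simp
  moreover have "0 \<le> (LBINT a:{0<..}. k a * (\<phi> a - x)\<^sup>2)"
    by (rule set_integral_k_mult_nonneg) simp
  ultimately show ?thesis
    unfolding x_def by (simp add: power2_eq_square)
qed

lemma g_fun_set_integral_k_mult_le: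
  assumes bound: "\<And>a. \<bar>\<phi> a\<bar> \<le> C" and [measurable]: "\<phi> \<in> borel_measurable borel"
  shows "g_fun (LBINT a:{0<..}. k a * \<phi> a) \<le> (LBINT a:{0<..}. k a * g_fun (\<phi> a))"
proof -
  have int: "set_integrable lborel {0<..} (\<lambda>a. k a * \<phi> a)"
    by (rule set_integrable_k_mult[OF bound]) auto
  have "(LBINT a:{0<..}. k a * (\<phi> a - 1)) = (LBINT a:{0<..}. k a * \<phi> a) - 1"
    using set_integral_diff(2)[OF int set_integrable_k] set_integral_k
    by (simp add: right_diff_distrib)
  moreover have "\<bar>\<phi> a - 1\<bar> \<le> C + 1" for a
    using bound[of a] by linarith
  ultimately show ?thesis
    using square_set_integral_k_mult_le[of "\<lambda>a. \<phi> a - 1" "C + 1"] by (simp add: g_fun_def)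
qed

definition k_nn :: "real \<Rightarrow> ennreal" where
  "k_nn \<sigma> = ennreal (k \<sigma>) * indicator {0<..} \<sigma>"

lemma k_nn_measurable [measurable]: "k_nn \<in> borel_measurable borel"
  unfolding k_nn_def by measurable

lemma nn_integral_k_nn_eq_set_integral:
  assumes nonneg: "\<And>a. 0 \<le> \<phi> a" and bound: "\<And>a. \<phi> a \<le> C"
    and [measurable]: "\<phi> \<in> borel_measurable borel"
    and A_borel [measurable]: "A \<in> sets borel" and A: "A \<subseteq> {0<..}"
  shows "(\<integral>\<^sup>+ \<sigma>. k_nn \<sigma> * indicator A \<sigma> * ennreal (\<phi> \<sigma>) \<partial>lborel)
    = ennreal (LBINT \<sigma>:A. k \<sigma> * \<phi> \<sigma>)"
proof -
  have "\<bar>\<phi> a\<bar> \<le> C" for a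
    using nonneg[of a] bound[of a] by simp
  then have "set_integrable lborel A (\<lambda>\<sigma>. k \<sigma> * \<phi> \<sigma>)"
    by (rule set_integrable_k_mult) (use A in auto)
  then have "integrable lborel (\<lambda>\<sigma>. indicator A \<sigma> *\<^sub>R (k \<sigma> * \<phi> \<sigma>))"
    unfolding set_integrable_def .
  moreover have "AE \<sigma> in lborel. 0 \<le> indicator A \<sigma> *\<^sub>R (k \<sigma> * \<phi> \<sigma>)"
    using AE_k_nonneg by eventually_elim (use A nonneg in \<open>auto simp: indicator_def\<close>)
  moreover have "(\<integral>\<^sup>+ \<sigma>. k_nn \<sigma> * indicator A \<sigma> * ennreal (\<phi> \<sigma>) \<partial>lborel)
      = (\<integral>\<^sup>+ \<sigma>. ennreal (indicator A \<sigma> *\<^sub>R (k \<sigma> * \<phi> \<sigma>)) \<partial>lborel)"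
    using AE_k_nonneg
    by (intro nn_integral_cong_AE, eventually_elim)
      (use A nonneg in \<open>auto simp: k_nn_def indicator_def ennreal_mult\<close>)
  ultimately show ?thesis
    unfolding set_lebesgue_integral_def by (simp add: nn_integral_eq_integral)
qed

lemma nn_integral_k_nn: "(\<integral>\<^sup>+ \<sigma>. k_nn \<sigma> \<partial>lborel) = 1"
proof -
  have "(\<integral>\<^sup>+ \<sigma>. k_nn \<sigma> \<partial>lborel) = (\<integral>\<^sup>+ \<sigma>. k_nn \<sigma> * indicator {0<..} \<sigma> * ennreal 1 \<partial>lborel)"
    by (intro nn_integral_cong) (simp add: k_nn_def indicator_def)
  also have "\<dots> = 1"
    using nn_integral_k_nn_eq_set_integral[of "\<lambda>_. 1" 1 "{0<..}"] set_integral_k by simp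
  finally show ?thesis .
qed

lemma gamma_fun_eq_nn_integral:
  assumes "0 < a"
  shows "ennreal (gamma_fun \<beta> \<mu> a) = (\<integral>\<^sup>+ \<sigma>. k_nn \<sigma> * indicator {a..} \<sigma> \<partial>lborel)"
  using nn_integral_k_nn_eq_set_integral[of "\<lambda>_. 1" 1 "{a..}"] assms
  by (simp add: gamma_fun_def k_def subset_eq)

lemma gamma_fun_nonneg:
  assumes "0 < a"
  shows "0 \<le> gamma_fun \<beta> \<mu> a"
  unfolding gamma_fun_def set_lebesgue_integral_def
  by (rule integral_nonneg_AE)
    (use AE_k_nonneg assms in \<open>auto simp: k_def indicator_def elim!: eventually_mono\<close>)

lemma nn_integral_k_nn_mult_finite: "(\<integral>\<^sup>+ \<sigma>. k_nn \<sigma> * ennreal \<sigma> \<partial>lborel) \<noteq> \<infinity>"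
proof -
  have "(\<integral>\<^sup>+ \<sigma>. k_nn \<sigma> * ennreal \<sigma> \<partial>lborel)
      \<le> (\<integral>\<^sup>+ \<sigma>. ennreal (max M 0) * (ennreal (\<sigma> * exp (- \<mu> * \<sigma>)) * indicator {0<..} \<sigma>) \<partial>lborel)"
    using beta_bounds
  proof (intro nn_integral_mono_AE, eventually_elim)
    case (elim \<sigma>)
    then show ?case
      by (cases "0 < \<sigma>")
        (auto simp: k_nn_def k_def ennreal_mult[symmetric] intro!: ennreal_leI mult_right_mono)
  qed
  also have "\<dots> = ennreal (max M 0)
      * (\<integral>\<^sup>+ \<sigma>. ennreal (\<sigma> * exp (- \<mu> * \<sigma>)) * indicator {0<..} \<sigma> \<partial>lborel)"
    by (rule nn_integral_cmult) measurable
  finally show ?thesis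
    using nn_integral_mult_exp_neg_finite[OF mu_pos]
    by (metis ennreal_mult_eq_top_iff ennreal_neq_top infinity_ennreal_def neq_top_trans)
qed

end

section \<open>The birth function of a complete orbit\<close>

locale complete_orbit_setting = age_kernel +
  fixes \<alpha> :: real and u :: "real \<Rightarrow> real \<Rightarrow> real"
  assumes alpha_gt_one: "1 < \<alpha>" and alpha_le_exp_2: "\<alpha> \<le> exp 2"
    and orbit: "complete_orbit \<beta> \<mu> \<alpha> u"
begin

definition renewal_solution :: "real \<Rightarrow> real \<Rightarrow> real \<Rightarrow> real" where
  "renewal_solution t s = (SOME b. continuous_on {0..s} b \<and>
     (\<forall>\<tau>\<in>{0..s}. b \<tau> = \<alpha> * f_ricker
        ((LBINT a:{\<tau>..}. \<beta> a * exp (- \<mu> * \<tau>) * u t (a - \<tau>))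
         + (LBINT a:{0..\<tau>}. \<beta> a * exp (- \<mu> * a) * b (\<tau> - a)))) \<and>
     (AE a in lborel. 0 < a \<longrightarrow>
        u (t + s) a = (if s \<le> a then exp (- \<mu> * s) * u t (a - s) else exp (- \<mu> * a) * b (s - a))))"

lemma renewal_solution:
  assumes "0 \<le> s"
  shows "continuous_on {0..s} (renewal_solution t s)"
    and "\<tau> \<in> {0..s} \<Longrightarrow> renewal_solution t s \<tau> = \<alpha> * f_ricker
        ((LBINT a:{\<tau>..}. \<beta> a * exp (- \<mu> * \<tau>) * u t (a - \<tau>))
         + (LBINT a:{0..\<tau>}. \<beta> a * exp (- \<mu> * a) * renewal_solution t s (\<tau> - a)))"
    and "AE a in lborel. 0 < a \<longrightarrow> u (t + s) a = (if s \<le> a then exp (- \<mu> * s) * u t (a - s)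
        else exp (- \<mu> * a) * renewal_solution t s (s - a))"
proof -
  have "semiflow_step \<beta> \<mu> \<alpha> s (u t) (u (t + s))"
    using orbit assms unfolding complete_orbit_def by blast
  from someI_ex[OF this[unfolded semiflow_step_def]]
  show "continuous_on {0..s} (renewal_solution t s)"
    and "\<tau> \<in> {0..s} \<Longrightarrow> renewal_solution t s \<tau> = \<alpha> * f_ricker
        ((LBINT a:{\<tau>..}. \<beta> a * exp (- \<mu> * \<tau>) * u t (a - \<tau>))
         + (LBINT a:{0..\<tau>}. \<beta> a * exp (- \<mu> * a) * renewal_solution t s (\<tau> - a)))"
    and "AE a in lborel. 0 < a \<longrightarrow> u (t + s) a = (if s \<le> a then exp (- \<mu> * s) * u t (a - s)
        else exp (- \<mu> * a) * renewal_solution t s (s - a))"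
    unfolding renewal_solution_def[symmetric] by blast+
qed

lemma continuous_on_renewal_solution_reflect:
  assumes "0 \<le> s" and "\<And>a. a \<in> S \<Longrightarrow> 0 \<le> c - a \<and> c - a \<le> s"
  shows "continuous_on S (\<lambda>a. renewal_solution t s (c - a))"
proof -
  have "continuous_on S (\<lambda>a. c - a)"
    by (intro continuous_intros)
  moreover have "(\<lambda>a. c - a) ` S \<subseteq> {0..s}"
    using assms(2) by auto
  ultimately show ?thesis
    by (rule continuous_on_compose2[OF renewal_solution(1)[OF assms(1)]])
qed

lemma age_profile_after_delay:
  assumes s: "0 < s" and d: "0 \<le> d"
  shows "AE a in lborel. d < a \<and> a < d + s \<longrightarrow>
    u (t + s + d) a = exp (- \<mu> * a) * renewal_solution t s (s + d - a)"
proof -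
  have "AE a in lborel. 0 < a - d \<longrightarrow> u (t + s) (a - d) = (if s \<le> a - d
      then exp (- \<mu> * s) * u t (a - d - s)
      else exp (- \<mu> * (a - d)) * renewal_solution t s (s - (a - d)))"
    using AE_lborel_translate[OF renewal_solution(3)[of s t], of d] s by simp
  with renewal_solution(3)[OF d, of "t + s"] show ?thesis
  proof eventually_elim
    case (elim a)
    show ?case
    proof
      assume a: "d < a \<and> a < d + s"
      then have "u (t + s + d) a = exp (- \<mu> * d) * u (t + s) (a - d)"
        using elim(1) d by auto
      also have "\<dots> = exp (- \<mu> * d) * (exp (- \<mu> * (a - d)) * renewal_solution t s (s - (a - d)))"
        using elim(2) a by auto
      also have "\<dots> = exp (- \<mu> * a) * renewal_solution t s (s + d - a)"
        by (simp add: mult.assoc[symmetric] exp_add[symmetric] algebra_simps)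
      finally show "u (t + s + d) a = exp (- \<mu> * a) * renewal_solution t s (s + d - a)" .
    qed
  qed
qed

\<comment> \<open>Renewal solutions of different windows agree where both are defined: both describe
  \<open>u T\<close> on a common age interval at a later time \<open>T\<close>, so they agree almost everywhere and,
  being continuous, everywhere. Hence the midpoints of the windows of length 2 define a global
  birth function.\<close>
definition birth :: "real \<Rightarrow> real" where
  "birth r = renewal_solution (r - 1) 2 1"

lemma renewal_solution_eq_birth:
  assumes s: "0 < s" and \<tau>: "0 < \<tau>" "\<tau> < s"
  shows "renewal_solution t s \<tau> = birth (t + \<tau>)"
proof -
  define r where "r = t + \<tau>"
  define T where "T = max (t + s) (r + 1)"
  define d where "d = T - (t + s)"
  define d' where "d' = T - (r - 1 + 2)"
  have d: "0 \<le> d" "0 \<le> d'"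
    unfolding d_def d'_def T_def by auto
  define S where "S = {max d d' <..< min (d + s) (d' + 2)}"
  have "renewal_solution t s (s + d - (T - r)) = renewal_solution (r - 1) 2 (2 + d' - (T - r))"
  proof (rule continuous_on_AE_eq_imp_eq[where p = "\<lambda>a. renewal_solution t s (s + d - a)"
        and q = "\<lambda>a. renewal_solution (r - 1) 2 (2 + d' - a)"])
    show "open S" unfolding S_def by simp
    show "continuous_on S (\<lambda>a. renewal_solution t s (s + d - a))"
      by (rule continuous_on_renewal_solution_reflect) (use s in \<open>auto simp: S_def\<close>)
    show "continuous_on S (\<lambda>a. renewal_solution (r - 1) 2 (2 + d' - a))"
      by (rule continuous_on_renewal_solution_reflect) (auto simp: S_def)
    have "AE a in lborel. d' < a \<and> a < d' + 2 \<longrightarrow>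
        u (r - 1 + 2 + d') a = exp (- \<mu> * a) * renewal_solution (r - 1) 2 (2 + d' - a)"
      by (rule age_profile_after_delay) (use d in auto)
    with age_profile_after_delay[OF s d(1), of t]
    show "AE a in lborel. a \<in> S \<longrightarrow>
        renewal_solution t s (s + d - a) = renewal_solution (r - 1) 2 (2 + d' - a)"
      by eventually_elim (auto simp: S_def d_def d'_def)
    show "T - r \<in> S"
      using \<tau> unfolding S_def d_def d'_def T_def r_def by auto
  qed
  moreover have "s + d - (T - r) = \<tau>" "2 + d' - (T - r) = 1"
    unfolding d_def d'_def r_def by auto
  ultimately show ?thesis
    unfolding birth_def r_def by simp
qed

lemma age_profile_eq_birth: "AE a in lborel. 0 < a \<longrightarrow> u T a = exp (- \<mu> * a) * birth (T - a)"
proof (rule AE_lborel_if_AE_bounded)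
  fix n :: nat
  define s where "s = real n + 1"
  have "AE a in lborel. 0 < a \<and> a < 0 + s \<longrightarrow>
      u (T - s + s + 0) a = exp (- \<mu> * a) * renewal_solution (T - s) s (s + 0 - a)"
    by (rule age_profile_after_delay) (simp_all add: s_def)
  then show "AE a in lborel. \<bar>a\<bar> < real n \<longrightarrow> 0 < a \<longrightarrow> u T a = exp (- \<mu> * a) * birth (T - a)"
    by eventually_elim (auto simp: s_def renewal_solution_eq_birth)
qed

lemma continuous_birth: "continuous_on UNIV birth"
proof -
  have "isCont birth r0" for r0
  proof -
    define S where "S = {r0 - 1 <..< r0 + 1}"
    have "continuous_on S (\<lambda>r. renewal_solution (r0 - 1) 2 (r - (r0 - 1)))"
    proof -
      have "continuous_on S (\<lambda>r. r - (r0 - 1))"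
        by (intro continuous_intros)
      moreover have "(\<lambda>r. r - (r0 - 1)) ` S \<subseteq> {0..2}"
        unfolding S_def by auto
      ultimately show ?thesis
        by (rule continuous_on_compose2[OF renewal_solution(1)[of 2 "r0 - 1"], rotated]) simp_all
    qed
    then have "continuous_on S birth"
      by (rule continuous_on_eq) (auto simp: S_def renewal_solution_eq_birth)
    then show ?thesis
      unfolding S_def by (simp add: continuous_on_eq_continuous_at)
  qed
  then show ?thesis
    by (simp add: continuous_at_imp_continuous_on)
qed

lemma birth_measurable [measurable]: "birth \<in> borel_measurable borel"
  using continuous_birth by (simp add: borel_measurable_continuous_onI)

lemma birth_nonneg: "0 \<le> birth r"
proof -
  have "AE a in lborel. 0 < a \<longrightarrow> 0 \<le> u (r + 1) a"
    using orbit unfolding complete_orbit_def by blast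
  with age_profile_eq_birth[of "r + 1"]
  have "AE a in lborel. a \<in> {0<..} \<longrightarrow> birth (r + 1 - a) = max 0 (birth (r + 1 - a))"
    by eventually_elim (auto simp: zero_le_mult_iff)
  moreover have "continuous_on {0<..} (\<lambda>a. birth (r + 1 - a))"
    by (intro continuous_on_compose2[OF continuous_birth] continuous_intros) auto
  moreover from this have "continuous_on {0<..} (\<lambda>a. max 0 (birth (r + 1 - a)))"
    by (intro continuous_intros)
  ultimately have "birth (r + 1 - 1) = max 0 (birth (r + 1 - 1))"
    by (intro continuous_on_AE_eq_imp_eq[where S = "{0<..}"]) auto
  then show ?thesis
    by (metis add_diff_cancel_right' max.orderI max_def)
qed

lemma birth_le: "birth r \<le> \<alpha> * exp (- 1)"
proof -
  have "birth r = \<alpha> * f_ricker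
      ((LBINT a:{1..}. \<beta> a * exp (- \<mu> * 1) * u (r - 1) (a - 1))
       + (LBINT a:{0..1}. \<beta> a * exp (- \<mu> * a) * renewal_solution (r - 1) 2 (1 - a)))"
    unfolding birth_def by (rule renewal_solution(2)) auto
  also have "\<dots> \<le> \<alpha> * exp (- 1)"
    using f_ricker_le alpha_gt_one by (intro mult_left_mono) auto
  finally show ?thesis .
qed

lemma abs_birth_le: "\<bar>birth r\<bar> \<le> \<alpha> * exp (- 1)"
  using birth_nonneg[of r] birth_le[of r] by linarith

lemma borel_measurable_age_profile: "(\<lambda>a. indicator {0<..} a * u t a) \<in> borel_measurable borel"
proof -
  have "integrable lborel (\<lambda>a. indicator {0<..} a *\<^sub>R u t a)"
    using orbit unfolding complete_orbit_def set_integrable_def by blast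
  then show ?thesis
    using borel_measurable_integrable by fastforce
qed

lemma renewal_past_term_eq:
  "(LBINT a:{1..}. \<beta> a * exp (- \<mu> * 1) * u (r - 1) (a - 1)) = (LBINT a:{1<..}. k a * birth (r - a))"
  unfolding set_lebesgue_integral_def
proof (rule integral_cong_AE)
  \<comment> \<open>The orbit is measurable only on ages \<open>> 0\<close>; the value at age 0 is a single point.\<close>
  have "(\<lambda>a. indicator {0<..} (a - 1) * u (r - 1) (a - 1)) \<in> borel_measurable borel"
    using measurable_compose[OF _ borel_measurable_age_profile, of "\<lambda>a. a - 1" borel] by simp
  then have "(\<lambda>a. if a = 1 then \<beta> 1 * exp (- \<mu> * 1) * u (r - 1) 0
      else \<beta> a * exp (- \<mu> * 1) * (indicator {0<..} (a - 1) * u (r - 1) (a - 1))) \<in> borel_measurable borel"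
    by measurable
  moreover have "(\<lambda>a. if a = 1 then \<beta> 1 * exp (- \<mu> * 1) * u (r - 1) 0
      else \<beta> a * exp (- \<mu> * 1) * (indicator {0<..} (a - 1) * u (r - 1) (a - 1)))
    = (\<lambda>a. indicator {1..} a *\<^sub>R (\<beta> a * exp (- \<mu> * 1) * u (r - 1) (a - 1)))"
    by (auto simp: fun_eq_iff indicator_def)
  ultimately show "(\<lambda>a. indicator {1..} a *\<^sub>R (\<beta> a * exp (- \<mu> * 1) * u (r - 1) (a - 1)))
      \<in> borel_measurable lborel"
    by simp
  show "(\<lambda>a. indicator {1<..} a *\<^sub>R (k a * birth (r - a))) \<in> borel_measurable lborel"
    by simp
  show "AE a in lborel. indicator {1..} a *\<^sub>R (\<beta> a * exp (- \<mu> * 1) * u (r - 1) (a - 1))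
      = indicator {1<..} a *\<^sub>R (k a * birth (r - a))"
    using AE_lborel_translate[OF age_profile_eq_birth[of "r - 1"], of 1] AE_lborel_singleton[of 1]
  proof eventually_elim
    case (elim a)
    show ?case
    proof (cases "1 < a")
      case True
      have "exp (- \<mu> * 1) * exp (- \<mu> * (a - 1)) = exp (- \<mu> * a)"
        by (simp add: algebra_simps flip: exp_add)
      then have "\<beta> a * exp (- \<mu> * 1) * u (r - 1) (a - 1) = k a * birth (r - a)"
        using elim True by (simp add: k_def)
      then show ?thesis
        using True by simp
    qed (use elim in \<open>auto simp: indicator_def\<close>)
  qed
qed

lemma renewal_recent_term_eq:
  "(LBINT a:{0..1}. \<beta> a * exp (- \<mu> * a) * renewal_solution (r - 1) 2 (1 - a))
    = (LBINT a:{0<..1}. k a * birth (r - a))"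
  unfolding set_lebesgue_integral_def
proof (rule integral_cong_AE)
  have "continuous_on {0..1} (\<lambda>a. renewal_solution (r - 1) 2 (1 - a))"
    by (rule continuous_on_renewal_solution_reflect) auto
  then have "(\<lambda>a. indicator {0..1} a *\<^sub>R renewal_solution (r - 1) 2 (1 - a)) \<in> borel_measurable borel"
    by (intro borel_measurable_continuous_on_indicator) simp_all
  then have "(\<lambda>a. k a * (indicator {0..1} a *\<^sub>R renewal_solution (r - 1) 2 (1 - a))) \<in> borel_measurable borel"
    by measurable
  then show "(\<lambda>a. indicator {0..1} a *\<^sub>R (\<beta> a * exp (- \<mu> * a) * renewal_solution (r - 1) 2 (1 - a)))
      \<in> borel_measurable lborel"
    by (simp add: k_def mult_ac)
  show "(\<lambda>a. indicator {0<..1} a *\<^sub>R (k a * birth (r - a))) \<in> borel_measurable lborel"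
    by simp
  show "AE a in lborel. indicator {0..1} a *\<^sub>R (\<beta> a * exp (- \<mu> * a) * renewal_solution (r - 1) 2 (1 - a))
      = indicator {0<..1} a *\<^sub>R (k a * birth (r - a))"
    using AE_lborel_singleton[of 0] AE_lborel_singleton[of 1]
  proof eventually_elim
    case (elim a)
    then show ?case
      by (cases "0 < a \<and> a < 1") (auto simp: indicator_def k_def renewal_solution_eq_birth)
  qed
qed

lemma birth_renewal_equation: "birth r = \<alpha> * f_ricker (LBINT \<sigma>:{0<..}. k \<sigma> * birth (r - \<sigma>))"
proof -
  have "birth r = \<alpha> * f_ricker
      ((LBINT a:{1..}. \<beta> a * exp (- \<mu> * 1) * u (r - 1) (a - 1))
       + (LBINT a:{0..1}. \<beta> a * exp (- \<mu> * a) * renewal_solution (r - 1) 2 (1 - a)))"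
    unfolding birth_def by (rule renewal_solution(2)) auto
  also have "(LBINT a:{1..}. \<beta> a * exp (- \<mu> * 1) * u (r - 1) (a - 1))
       + (LBINT a:{0..1}. \<beta> a * exp (- \<mu> * a) * renewal_solution (r - 1) 2 (1 - a))
     = (LBINT \<sigma>:{0<..1} \<union> {1<..}. k \<sigma> * birth (r - \<sigma>))"
    unfolding renewal_past_term_eq renewal_recent_term_eq
    by (subst set_integral_Un_AE)
      (auto intro!: set_integrable_k_mult[OF abs_birth_le])
  also have "{0<..1} \<union> {1<..} = ({0<..} :: real set)"
    by auto
  finally show ?thesis .
qed

section \<open>The Lyapunov functional along the orbit\<close>

\<comment> \<open>The birth rate in units of the equilibrium birth rate \<open>ln \<alpha>\<close>.\<close>
definition B :: "real \<Rightarrow> real" where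
  "B r = birth r / ln \<alpha>"

definition B_mean :: "real \<Rightarrow> real" where
  "B_mean r = (LBINT \<sigma>:{0<..}. k \<sigma> * B (r - \<sigma>))"

definition G :: "real \<Rightarrow> real" where
  "G r = g_fun (B r)"

definition B_max :: real where
  "B_max = \<alpha> * exp (- 1) / ln \<alpha>"

lemma ln_alpha_pos: "0 < ln \<alpha>"
  using alpha_gt_one by simp

lemma ln_alpha_le_2: "ln \<alpha> \<le> 2"
  using alpha_gt_one alpha_le_exp_2 by (metis ln_exp ln_le_cancel_iff exp_gt_zero less_trans zero_less_one)

lemma B_nonneg: "0 \<le> B r"
  unfolding B_def using birth_nonneg ln_alpha_pos by simp

lemma abs_B_le: "\<bar>B r\<bar> \<le> B_max"
  unfolding B_def B_max_def using birth_nonneg[of r] birth_le[of r] ln_alpha_pos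
  by (simp add: divide_right_mono)

lemma continuous_B: "continuous_on UNIV B"
  unfolding B_def using continuous_birth ln_alpha_pos by (intro continuous_intros) auto

lemma B_measurable [measurable]: "B \<in> borel_measurable borel"
  unfolding B_def by measurable

lemma G_measurable [measurable]: "G \<in> borel_measurable borel"
  unfolding G_def g_fun_def by measurable

lemma G_nonneg: "0 \<le> G r"
  unfolding G_def g_fun_def by simp

lemma G_le: "G r \<le> (B_max + 1)\<^sup>2"
proof -
  have "\<bar>B r - 1\<bar> \<le> B_max + 1"
    using abs_B_le[of r] by linarith
  then have "\<bar>B r - 1\<bar>\<^sup>2 \<le> (B_max + 1)\<^sup>2"
    by (intro power_mono) auto
  then show ?thesis
    unfolding G_def g_fun_def by simp
qed

lemma B_eq_normalized_ricker: "B r = normalized_ricker (ln \<alpha>) (B_mean r)"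
proof -
  have "(\<lambda>\<sigma>. k \<sigma> * birth (r - \<sigma>)) = (\<lambda>\<sigma>. ln \<alpha> * (k \<sigma> * B (r - \<sigma>)))"
    using ln_alpha_pos by (auto simp: B_def fun_eq_iff)
  then have "birth r = \<alpha> * f_ricker (ln \<alpha> * B_mean r)"
    using birth_renewal_equation[of r] by (simp add: B_mean_def)
  also have "\<dots> = ln \<alpha> * normalized_ricker (ln \<alpha>) (B_mean r)"
    using alpha_gt_one by (simp add: alpha_f_ricker_eq_normalized_ricker)
  finally show ?thesis
    unfolding B_def using ln_alpha_pos by simp
qed

lemma B_mean_nonneg: "0 \<le> B_mean r"
  unfolding B_mean_def by (rule set_integral_k_mult_nonneg) (rule B_nonneg)

lemma g_fun_B_mean_le: "g_fun (B_mean r) \<le> (LBINT \<sigma>:{0<..}. k \<sigma> * G (r - \<sigma>))"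
  unfolding B_mean_def G_def by (rule g_fun_set_integral_k_mult_le[OF abs_B_le]) measurable

lemma G_le_set_integral_G: "G r \<le> (LBINT \<sigma>:{0<..}. k \<sigma> * G (r - \<sigma>))"
proof -
  have "G r = g_fun (normalized_ricker (ln \<alpha>) (B_mean r))"
    unfolding G_def B_eq_normalized_ricker ..
  also have "\<dots> \<le> g_fun (B_mean r)"
    by (rule g_fun_normalized_ricker_le[OF ln_alpha_pos ln_alpha_le_2 B_mean_nonneg])
  also have "\<dots> \<le> (LBINT \<sigma>:{0<..}. k \<sigma> * G (r - \<sigma>))"
    by (rule g_fun_B_mean_le)
  finally show ?thesis .
qed

lemma B_zero_or_one_if_set_integral_G_le:
  assumes "(LBINT \<sigma>:{0<..}. k \<sigma> * G (r - \<sigma>)) \<le> G r"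
  shows "B r * (B r - 1) = 0"
proof -
  have "g_fun (B_mean r) \<le> g_fun (normalized_ricker (ln \<alpha>) (B_mean r))"
    using g_fun_B_mean_le[of r] assms unfolding G_def B_eq_normalized_ricker by simp
  then have "B_mean r = 0 \<or> B_mean r = 1"
    using g_fun_normalized_ricker_less[OF ln_alpha_pos ln_alpha_le_2 B_mean_nonneg] by fastforce
  then show ?thesis
    unfolding B_eq_normalized_ricker by (auto simp: normalized_ricker_def)
qed

definition G_integral :: "real \<Rightarrow> real \<Rightarrow> ennreal" where
  "G_integral p q = (\<integral>\<^sup>+ r. indicator {p..<q} r * ennreal (G r) \<partial>lborel)"

definition mean_G :: "real \<Rightarrow> ennreal" where
  "mean_G r = (\<integral>\<^sup>+ \<sigma>. k_nn \<sigma> * ennreal (G (r - \<sigma>)) \<partial>lborel)"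

lemma G_integral_measurable [measurable]:
  fixes f g :: "real \<Rightarrow> real"
  assumes [measurable]: "f \<in> borel_measurable borel" "g \<in> borel_measurable borel"
  shows "(\<lambda>\<sigma>. G_integral (f \<sigma>) (g \<sigma>)) \<in> borel_measurable borel"
proof -
  have "(\<lambda>\<sigma>. \<integral>\<^sup>+ r. (if f \<sigma> \<le> r \<and> r < g \<sigma> then 1 else 0) * ennreal (G r) \<partial>lborel)
      \<in> borel_measurable lborel"
    by (rule lborel.borel_measurable_nn_integral) measurable
  moreover have "G_integral p q = (\<integral>\<^sup>+ r. (if p \<le> r \<and> r < q then 1 else 0) * ennreal (G r) \<partial>lborel)"
    for p q
    unfolding G_integral_def by (rule nn_integral_cong) (auto simp: indicator_def)
  ultimately show ?thesis
    by simp
qed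

lemma G_integral_add:
  assumes "p \<le> q" "q \<le> w"
  shows "G_integral p q + G_integral q w = G_integral p w"
proof -
  have "G_integral p q + G_integral q w
      = (\<integral>\<^sup>+ r. indicator {p..<q} r * ennreal (G r) + indicator {q..<w} r * ennreal (G r) \<partial>lborel)"
    unfolding G_integral_def by (rule nn_integral_add[symmetric]) auto
  also have "\<dots> = G_integral p w"
    unfolding G_integral_def by (rule nn_integral_cong) (use assms in \<open>auto simp: indicator_def\<close>)
  finally show ?thesis .
qed

lemma G_integral_le:
  assumes "p \<le> q"
  shows "G_integral p q \<le> ennreal ((B_max + 1)\<^sup>2) * ennreal (q - p)"
proof -
  have "G_integral p q \<le> (\<integral>\<^sup>+ r. ennreal ((B_max + 1)\<^sup>2) * indicator {p..<q} r \<partial>lborel)"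
    unfolding G_integral_def
    by (rule nn_integral_mono) (auto simp: indicator_def intro!: ennreal_leI G_le)
  also have "\<dots> = ennreal ((B_max + 1)\<^sup>2) * ennreal (q - p)"
    using assms by (simp add: nn_integral_cmult_indicator)
  finally show ?thesis .
qed

lemma nn_integral_reflect_G_integral:
  "(\<integral>\<^sup>+ a. indicator {0<..\<sigma>} a * ennreal (G (t - a)) \<partial>lborel) = G_integral (t - \<sigma>) t"
proof -
  have "G_integral (t - \<sigma>) t = (\<integral>\<^sup>+ a. indicator {t - \<sigma>..<t} (t + (- 1) * a)
      * ennreal (G (t + (- 1) * a)) \<partial>lborel)"
    unfolding G_integral_def
    using nn_integral_real_affine[of "\<lambda>r. indicator {t - \<sigma>..<t} r * ennreal (G r)" "- 1" t] by simp
  also have "\<dots> = (\<integral>\<^sup>+ a. indicator {0<..\<sigma>} a * ennreal (G (t - a)) \<partial>lborel)"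
    by (auto intro!: nn_integral_cong simp: indicator_def)
  finally show ?thesis ..
qed

lemma nn_integral_translate_G_integral:
  "(\<integral>\<^sup>+ r. indicator {t..<t + s} r * ennreal (G (r - \<sigma>)) \<partial>lborel) = G_integral (t - \<sigma>) (t + s - \<sigma>)"
proof -
  have "G_integral (t - \<sigma>) (t + s - \<sigma>) = (\<integral>\<^sup>+ a. indicator {t - \<sigma>..<t + s - \<sigma>} (- \<sigma> + 1 * a)
      * ennreal (G (- \<sigma> + 1 * a)) \<partial>lborel)"
    unfolding G_integral_def
    using nn_integral_real_affine[of "\<lambda>r. indicator {t - \<sigma>..<t + s - \<sigma>} r * ennreal (G r)" 1 "- \<sigma>"]
    by simp
  also have "\<dots> = (\<integral>\<^sup>+ r. indicator {t..<t + s} r * ennreal (G (r - \<sigma>)) \<partial>lborel)"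
    by (auto intro!: nn_integral_cong simp: indicator_def)
  finally show ?thesis ..
qed

lemma mean_G_measurable [measurable]: "mean_G \<in> borel_measurable borel"
proof -
  have "(\<lambda>r. \<integral>\<^sup>+ \<sigma>. k_nn \<sigma> * ennreal (G (r - \<sigma>)) \<partial>lborel) \<in> borel_measurable lborel"
    by (rule lborel.borel_measurable_nn_integral) measurable
  then show ?thesis
    unfolding mean_G_def[abs_def] by simp
qed

lemma mean_G_eq_set_integral: "mean_G r = ennreal (LBINT \<sigma>:{0<..}. k \<sigma> * G (r - \<sigma>))"
proof -
  have "mean_G r = (\<integral>\<^sup>+ \<sigma>. k_nn \<sigma> * indicator {0<..} \<sigma> * ennreal (G (r - \<sigma>)) \<partial>lborel)"
    unfolding mean_G_def by (intro nn_integral_cong) (simp add: k_nn_def indicator_def)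
  also have "\<dots> = ennreal (LBINT \<sigma>:{0<..}. k \<sigma> * G (r - \<sigma>))"
    by (rule nn_integral_k_nn_eq_set_integral[OF G_nonneg G_le]) auto
  finally show ?thesis .
qed

lemma G_le_mean_G: "ennreal (G r) \<le> mean_G r"
  unfolding mean_G_eq_set_integral by (rule ennreal_leI[OF G_le_set_integral_G])

lemma mean_G_le: "mean_G r \<le> ennreal ((B_max + 1)\<^sup>2)"
proof -
  have "mean_G r \<le> (\<integral>\<^sup>+ \<sigma>. k_nn \<sigma> * ennreal ((B_max + 1)\<^sup>2) \<partial>lborel)"
    unfolding mean_G_def by (rule nn_integral_mono) (auto intro!: mult_left_mono ennreal_leI G_le)
  also have "\<dots> = ennreal ((B_max + 1)\<^sup>2)"
    by (simp add: nn_integral_multc nn_integral_k_nn)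
  finally show ?thesis .
qed

lemma V_fun_eq_nn_integral_gamma_G:
  "V_fun \<beta> \<mu> \<alpha> (u t)
    = (\<integral>\<^sup>+ a. ennreal (gamma_fun \<beta> \<mu> a) * ennreal (G (t - a)) * indicator {0<..} a \<partial>lborel)"
  unfolding V_fun_def
proof (rule nn_integral_cong_AE)
  show "AE a in lborel. ennreal (gamma_fun \<beta> \<mu> a * g_fun (u t a / ubar \<alpha> \<mu> a)) * indicator {0<..} a
      = ennreal (gamma_fun \<beta> \<mu> a) * ennreal (G (t - a)) * indicator {0<..} a"
    using age_profile_eq_birth[of t]
  proof eventually_elim
    case (elim a)
    show ?case
    proof (cases "0 < a")
      case True
      then have "u t a / ubar \<alpha> \<mu> a = B (t - a)"
        using elim ln_alpha_pos unfolding ubar_def B_def by simp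
      then show ?thesis
        using True gamma_fun_nonneg[OF True] G_nonneg by (simp add: G_def ennreal_mult)
    qed simp
  qed
qed

lemma V_fun_eq_nn_integral_G_integral:
  "V_fun \<beta> \<mu> \<alpha> (u t) = (\<integral>\<^sup>+ \<sigma>. k_nn \<sigma> * G_integral (t - \<sigma>) t \<partial>lborel)"
proof -
  have "V_fun \<beta> \<mu> \<alpha> (u t) = (\<integral>\<^sup>+ a. \<integral>\<^sup>+ \<sigma>. k_nn \<sigma> * indicator {a..} \<sigma> * ennreal (G (t - a))
      * indicator {0<..} a \<partial>lborel \<partial>lborel)"
    unfolding V_fun_eq_nn_integral_gamma_G
  proof (intro nn_integral_cong)
    fix a :: real
    show "ennreal (gamma_fun \<beta> \<mu> a) * ennreal (G (t - a)) * indicator {0<..} a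
        = (\<integral>\<^sup>+ \<sigma>. k_nn \<sigma> * indicator {a..} \<sigma> * ennreal (G (t - a)) * indicator {0<..} a \<partial>lborel)"
      by (cases "0 < a") (simp_all add: gamma_fun_eq_nn_integral nn_integral_multc)
  qed
  also have "\<dots> = (\<integral>\<^sup>+ \<sigma>. \<integral>\<^sup>+ a. k_nn \<sigma> * indicator {a..} \<sigma> * ennreal (G (t - a))
      * indicator {0<..} a \<partial>lborel \<partial>lborel)"
  proof (rule lborel_pair.Fubini')
    have "(\<lambda>(\<sigma>, a). k_nn \<sigma> * (if a \<le> \<sigma> then 1 else 0) * ennreal (G (t - a)) * indicator {0<..} a)
        \<in> borel_measurable (lborel \<Otimes>\<^sub>M lborel)"
      by measurable
    then show "(\<lambda>(\<sigma>, a). k_nn \<sigma> * indicator {a..} \<sigma> * ennreal (G (t - a)) * indicator {0<..} a)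
        \<in> borel_measurable (lborel \<Otimes>\<^sub>M lborel)"
      by (simp add: indicator_def[of "{_..}"] case_prod_beta)
  qed
  also have "\<dots> = (\<integral>\<^sup>+ \<sigma>. k_nn \<sigma> * G_integral (t - \<sigma>) t \<partial>lborel)"
  proof (rule nn_integral_cong)
    fix \<sigma>
    have "(\<integral>\<^sup>+ a. k_nn \<sigma> * indicator {a..} \<sigma> * ennreal (G (t - a)) * indicator {0<..} a \<partial>lborel)
        = (\<integral>\<^sup>+ a. k_nn \<sigma> * (indicator {0<..\<sigma>} a * ennreal (G (t - a))) \<partial>lborel)"
      by (rule nn_integral_cong) (auto simp: indicator_def)
    also have "\<dots> = k_nn \<sigma> * G_integral (t - \<sigma>) t"
      by (simp add: nn_integral_cmult nn_integral_reflect_G_integral)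
    finally show "(\<integral>\<^sup>+ a. k_nn \<sigma> * indicator {a..} \<sigma> * ennreal (G (t - a)) * indicator {0<..} a \<partial>lborel)
        = k_nn \<sigma> * G_integral (t - \<sigma>) t" .
  qed
  finally show ?thesis .
qed

lemma nn_integral_mean_G_eq:
  "(\<integral>\<^sup>+ r. indicator {t..<t + s} r * mean_G r \<partial>lborel)
    = (\<integral>\<^sup>+ \<sigma>. k_nn \<sigma> * G_integral (t - \<sigma>) (t + s - \<sigma>) \<partial>lborel)"
proof -
  have "(\<integral>\<^sup>+ r. indicator {t..<t + s} r * mean_G r \<partial>lborel)
      = (\<integral>\<^sup>+ r. \<integral>\<^sup>+ \<sigma>. indicator {t..<t + s} r * (k_nn \<sigma> * ennreal (G (r - \<sigma>))) \<partial>lborel \<partial>lborel)"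
    unfolding mean_G_def by (intro nn_integral_cong) (simp add: nn_integral_cmult)
  also have "\<dots> = (\<integral>\<^sup>+ \<sigma>. \<integral>\<^sup>+ r. indicator {t..<t + s} r * (k_nn \<sigma> * ennreal (G (r - \<sigma>)))
      \<partial>lborel \<partial>lborel)"
    by (rule lborel_pair.Fubini') measurable
  also have "\<dots> = (\<integral>\<^sup>+ \<sigma>. \<integral>\<^sup>+ r. k_nn \<sigma> * (indicator {t..<t + s} r * ennreal (G (r - \<sigma>)))
      \<partial>lborel \<partial>lborel)"
    by (simp add: mult.left_commute)
  also have "\<dots> = (\<integral>\<^sup>+ \<sigma>. k_nn \<sigma> * G_integral (t - \<sigma>) (t + s - \<sigma>) \<partial>lborel)"
    by (simp add: nn_integral_cmult nn_integral_translate_G_integral)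
  finally show ?thesis .
qed

lemma nn_integral_mean_G_finite:
  assumes "0 \<le> s"
  shows "(\<integral>\<^sup>+ r. indicator {t..<t + s} r * mean_G r \<partial>lborel) \<noteq> \<infinity>"
proof -
  have "(\<integral>\<^sup>+ r. indicator {t..<t + s} r * mean_G r \<partial>lborel)
      \<le> (\<integral>\<^sup>+ r. ennreal ((B_max + 1)\<^sup>2) * indicator {t..<t + s} r \<partial>lborel)"
    by (rule nn_integral_mono) (auto simp: indicator_def mean_G_le)
  also have "\<dots> = ennreal ((B_max + 1)\<^sup>2) * ennreal s"
    using assms by (simp add: nn_integral_cmult_indicator)
  finally show ?thesis
    by (metis ennreal_mult_eq_top_iff ennreal_neq_top infinity_ennreal_def neq_top_trans)
qed

lemma V_fun_add_nn_integral_mean_G: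
  assumes s: "0 \<le> s"
  shows "V_fun \<beta> \<mu> \<alpha> (u (t + s)) + (\<integral>\<^sup>+ r. indicator {t..<t + s} r * mean_G r \<partial>lborel)
    = V_fun \<beta> \<mu> \<alpha> (u t) + G_integral t (t + s)"
proof -
  have split: "G_integral (t + s - \<sigma>) (t + s) + G_integral (t - \<sigma>) (t + s - \<sigma>)
      = G_integral (t - \<sigma>) t + G_integral t (t + s)" if "0 < \<sigma>" for \<sigma>
    using G_integral_add[of "t - \<sigma>" "t + s - \<sigma>" "t + s"] G_integral_add[of "t - \<sigma>" t "t + s"] s that
    by (simp add: add.commute)
  have "V_fun \<beta> \<mu> \<alpha> (u (t + s)) + (\<integral>\<^sup>+ r. indicator {t..<t + s} r * mean_G r \<partial>lborel)
      = (\<integral>\<^sup>+ \<sigma>. k_nn \<sigma> * G_integral (t + s - \<sigma>) (t + s) + k_nn \<sigma> * G_integral (t - \<sigma>) (t + s - \<sigma>) \<partial>lborel)"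
    unfolding V_fun_eq_nn_integral_G_integral nn_integral_mean_G_eq
    by (rule nn_integral_add[symmetric]) auto
  also have "\<dots> = (\<integral>\<^sup>+ \<sigma>. k_nn \<sigma> * G_integral (t - \<sigma>) t + k_nn \<sigma> * G_integral t (t + s) \<partial>lborel)"
  proof (intro nn_integral_cong)
    fix \<sigma> :: real
    show "k_nn \<sigma> * G_integral (t + s - \<sigma>) (t + s) + k_nn \<sigma> * G_integral (t - \<sigma>) (t + s - \<sigma>)
        = k_nn \<sigma> * G_integral (t - \<sigma>) t + k_nn \<sigma> * G_integral t (t + s)"
      by (cases "0 < \<sigma>") (simp_all add: k_nn_def split flip: distrib_left)
  qed
  also have "\<dots> = V_fun \<beta> \<mu> \<alpha> (u t) + G_integral t (t + s)"
    unfolding V_fun_eq_nn_integral_G_integral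
    by (subst nn_integral_add) (auto simp: nn_integral_multc nn_integral_k_nn)
  finally show ?thesis .
qed

lemma V_fun_antimono:
  assumes "0 \<le> s"
  shows "V_fun \<beta> \<mu> \<alpha> (u (t + s)) \<le> V_fun \<beta> \<mu> \<alpha> (u t)"
proof -
  have "G_integral t (t + s) \<le> (\<integral>\<^sup>+ r. indicator {t..<t + s} r * mean_G r \<partial>lborel)"
    unfolding G_integral_def by (rule nn_integral_mono) (auto intro!: mult_left_mono G_le_mean_G)
  then have "V_fun \<beta> \<mu> \<alpha> (u (t + s)) + (\<integral>\<^sup>+ r. indicator {t..<t + s} r * mean_G r \<partial>lborel)
      \<le> V_fun \<beta> \<mu> \<alpha> (u t) + (\<integral>\<^sup>+ r. indicator {t..<t + s} r * mean_G r \<partial>lborel)"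
    unfolding V_fun_add_nn_integral_mean_G[OF assms] by (rule add_left_mono)
  then show ?thesis
    using nn_integral_mean_G_finite[OF assms, of t] by (simp add: add.commute ennreal_add_left_cancel_le)
qed

lemma V_fun_finite: "V_fun \<beta> \<mu> \<alpha> (u t) \<noteq> \<infinity>"
proof -
  have "V_fun \<beta> \<mu> \<alpha> (u t) \<le> (\<integral>\<^sup>+ \<sigma>. ennreal ((B_max + 1)\<^sup>2) * (k_nn \<sigma> * ennreal \<sigma>) \<partial>lborel)"
    unfolding V_fun_eq_nn_integral_G_integral
  proof (rule nn_integral_mono)
    fix \<sigma>
    show "k_nn \<sigma> * G_integral (t - \<sigma>) t \<le> ennreal ((B_max + 1)\<^sup>2) * (k_nn \<sigma> * ennreal \<sigma>)"
    proof (cases "0 < \<sigma>")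
      case True
      then have "k_nn \<sigma> * G_integral (t - \<sigma>) t \<le> k_nn \<sigma> * (ennreal ((B_max + 1)\<^sup>2) * ennreal \<sigma>)"
        using G_integral_le[of "t - \<sigma>" t] by (intro mult_left_mono) auto
      then show ?thesis
        by (simp add: mult_ac)
    qed (simp add: k_nn_def)
  qed
  also have "\<dots> = ennreal ((B_max + 1)\<^sup>2) * (\<integral>\<^sup>+ \<sigma>. k_nn \<sigma> * ennreal \<sigma> \<partial>lborel)"
    by (rule nn_integral_cmult) measurable
  finally show ?thesis
    using nn_integral_k_nn_mult_finite
    by (metis ennreal_mult_eq_top_iff ennreal_neq_top infinity_ennreal_def neq_top_trans)
qed

lemma AE_mean_G_le_G_on_interval_if_V_fun_constant:
  assumes const: "\<forall>t. V_fun \<beta> \<mu> \<alpha> (u t) = c" and s: "0 \<le> s"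
  shows "AE r in lborel. r \<in> {t..<t + s} \<longrightarrow> mean_G r \<le> ennreal (G r)"
proof -
  have "c \<noteq> \<infinity>"
    using V_fun_finite const by metis
  then have eq: "(\<integral>\<^sup>+ r. indicator {t..<t + s} r * mean_G r \<partial>lborel) = G_integral t (t + s)"
    using V_fun_add_nn_integral_mean_G[OF s, of t] const by (simp add: ennreal_add_left_cancel)
  have "(\<integral>\<^sup>+ r. indicator {t..<t + s} r * mean_G r - indicator {t..<t + s} r * ennreal (G r) \<partial>lborel)
      = (\<integral>\<^sup>+ r. indicator {t..<t + s} r * mean_G r \<partial>lborel) - G_integral t (t + s)"
    unfolding G_integral_def
  proof (rule nn_integral_diff)
    show "(\<integral>\<^sup>+ r. indicator {t..<t + s} r * ennreal (G r) \<partial>lborel) \<noteq> \<infinity>"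
      using nn_integral_mean_G_finite[OF s, of t] eq by (simp add: G_integral_def)
  qed (auto intro!: mult_left_mono G_le_mean_G)
  also have "\<dots> = 0"
    using eq nn_integral_mean_G_finite[OF s, of t]
    by (simp add: diff_eq_0_iff_ennreal top.not_eq_extremum)
  finally have "AE r in lborel.
      indicator {t..<t + s} r * mean_G r - indicator {t..<t + s} r * ennreal (G r) = 0"
    by (subst (asm) nn_integral_0_iff_AE) auto
  then show ?thesis
    by eventually_elim (auto dest: ennreal_minus_eq_0)
qed

lemma AE_mean_G_le_G_if_V_fun_constant:
  assumes "\<forall>t. V_fun \<beta> \<mu> \<alpha> (u t) = c"
  shows "AE r in lborel. mean_G r \<le> ennreal (G r)"
proof (rule AE_lborel_if_AE_bounded)
  fix n :: nat
  have "AE r in lborel. r \<in> {- real n..<- real n + 2 * real n} \<longrightarrow> mean_G r \<le> ennreal (G r)"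
    by (rule AE_mean_G_le_G_on_interval_if_V_fun_constant[OF assms]) simp
  then show "AE r in lborel. \<bar>r\<bar> < real n \<longrightarrow> mean_G r \<le> ennreal (G r)"
    by eventually_elim (auto simp: abs_less_iff)
qed

lemma B_zero_or_one_if_V_fun_constant:
  assumes "\<forall>t. V_fun \<beta> \<mu> \<alpha> (u t) = c"
  shows "B r = 0 \<or> B r = 1"
proof -
  have "AE r in lborel. r \<in> UNIV \<longrightarrow> B r * (B r - 1) = 0"
    using AE_mean_G_le_G_if_V_fun_constant[OF assms]
  proof eventually_elim
    case (elim r)
    then have "(LBINT \<sigma>:{0<..}. k \<sigma> * G (r - \<sigma>)) \<le> G r"
      by (simp add: mean_G_eq_set_integral G_nonneg)
    then show ?case
      using B_zero_or_one_if_set_integral_G_le by blast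
  qed
  moreover have "continuous_on UNIV (\<lambda>r. B r * (B r - 1))"
    using continuous_B by (intro continuous_intros)
  ultimately have "B r * (B r - 1) = 0"
    by (intro continuous_on_AE_eq_imp_eq[where p = "\<lambda>r. B r * (B r - 1)" and q = "\<lambda>_. 0"]) auto
  then show ?thesis
    by simp
qed

lemma B_constant_if_V_fun_constant:
  assumes "\<forall>t. V_fun \<beta> \<mu> \<alpha> (u t) = c"
  shows "(\<forall>r. B r = 0) \<or> (\<forall>r. B r = 1)"
proof -
  have zero_or_one: "B r = 0 \<or> B r = 1" for r
    by (rule B_zero_or_one_if_V_fun_constant[OF assms])
  have "B r \<noteq> 1 / 2" for r
    using zero_or_one[of r] by linarith
  then have "1 / 2 \<notin> range B"
    by (metis rangeE)
  moreover have "connected (range B)"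
    using connected_continuous_image[OF continuous_B connected_UNIV] .
  ultimately have "0 \<notin> range B \<or> 1 \<notin> range B"
    using connectedD_interval[of "range B" 0 1 "1 / 2"] by auto
  then show ?thesis
    using zero_or_one by (metis rangeI)
qed

lemma age_profile_eq_ubar_if_V_fun_constant:
  assumes const: "\<forall>t. V_fun \<beta> \<mu> \<alpha> (u t) = c"
    and A: "A \<subseteq> {0<..}" and nontrivial: "(LBINT a:A. u t0 a) \<noteq> 0"
  shows "AE a in lborel. 0 < a \<longrightarrow> u t a = ubar \<alpha> \<mu> a"
proof -
  have "\<not> (\<forall>r. B r = 0)"
  proof
    assume "\<forall>r. B r = 0"
    then have birth_zero: "birth r = 0" for r
      using ln_alpha_pos by (simp add: B_def)
    have "AE a in lborel. 0 < a \<longrightarrow> u t0 a = 0"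
      using age_profile_eq_birth[of t0] by eventually_elim (simp add: birth_zero)
    then have "(LBINT a:A. u t0 a) = 0"
      unfolding set_lebesgue_integral_def
      by (intro integral_eq_zero_AE) (use A in \<open>auto elim!: eventually_mono simp: indicator_def\<close>)
    with nontrivial show False ..
  qed
  then have birth_eq: "birth r = ln \<alpha>" for r
    using B_constant_if_V_fun_constant[OF const] ln_alpha_pos by (auto simp: B_def)
  show ?thesis
    using age_profile_eq_birth[of t] by eventually_elim (simp add: birth_eq ubar_def mult.commute)
qed

end

lemma V_fun_eq_0_if_AE_eq_ubar:
  assumes "1 < \<alpha>" and "AE a in lborel. 0 < a \<longrightarrow> v a = ubar \<alpha> \<mu> a"
  shows "V_fun \<beta> \<mu> \<alpha> v = 0"
proof -
  have "V_fun \<beta> \<mu> \<alpha> v = (\<integral>\<^sup>+ (a :: real). 0 \<partial>lborel)"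
    unfolding V_fun_def
  proof (rule nn_integral_cong_AE)
    have ubar_nonzero: "ubar \<alpha> \<mu> a \<noteq> 0" for a
      unfolding ubar_def using assms(1) by simp
    show "AE a in lborel.
        ennreal (gamma_fun \<beta> \<mu> a * g_fun (v a / ubar \<alpha> \<mu> a)) * indicator {0<..} a = 0"
      using assms(2) by eventually_elim (auto simp: g_fun_def indicator_def ubar_nonzero)
  qed
  then show ?thesis
    by simp
qed

theorem proposition6p4:
  fixes \<mu> \<alpha> \<gamma>m \<gamma>p :: real and \<beta> :: "real \<Rightarrow> real" and u :: "real \<Rightarrow> real \<Rightarrow> real"
  assumes "\<mu> > 0"
    and "1 < \<alpha>" and "\<alpha> \<le> exp 2"
    and "\<beta> \<in> borel_measurable lborel"
    and "\<exists>M. AE a in lborel. 0 < a \<longrightarrow> 0 \<le> \<beta> a \<and> \<beta> a \<le> M"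
    and "(LBINT a:{0<..}. \<beta> a * exp (- \<mu> * a)) = 1"
    and "complete_orbit \<beta> \<mu> \<alpha> u"
    and "0 < \<gamma>m" and "\<gamma>m < \<gamma>p"
    and "\<forall>t. \<gamma>m \<le> (LBINT a:{a. 0 < a \<and> ereal a < astar \<beta> \<mu>}. u t a)
            \<and> (LBINT a:{a. 0 < a \<and> ereal a < astar \<beta> \<mu>}. u t a) \<le> \<gamma>p"
  shows "antimono (\<lambda>t. V_fun \<beta> \<mu> \<alpha> (u t))
    \<and> ((\<exists>c. \<forall>t. V_fun \<beta> \<mu> \<alpha> (u t) = c) \<longleftrightarrow>
        (\<forall>t. AE a in lborel. 0 < a \<longrightarrow> u t a = ubar \<alpha> \<mu> a))"
proof -
  obtain M where "AE a in lborel. 0 < a \<longrightarrow> 0 \<le> \<beta> a \<and> \<beta> a \<le> M"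
    using assms(5) by blast
  then interpret complete_orbit_setting \<beta> \<mu> M \<alpha> u
    by unfold_locales (use assms in auto)
  have "antimono (\<lambda>t. V_fun \<beta> \<mu> \<alpha> (u t))"
  proof (rule antimonoI)
    fix t t' :: real
    assume "t \<le> t'"
    then show "V_fun \<beta> \<mu> \<alpha> (u t') \<le> V_fun \<beta> \<mu> \<alpha> (u t)"
      using V_fun_antimono[of "t' - t" t] by simp
  qed
  moreover have "\<forall>t. AE a in lborel. 0 < a \<longrightarrow> u t a = ubar \<alpha> \<mu> a"
    if "\<forall>t. V_fun \<beta> \<mu> \<alpha> (u t) = c" for c
  proof
    fix t
    have nontrivial: "(LBINT a:{a. 0 < a \<and> ereal a < astar \<beta> \<mu>}. u 0 a) \<noteq> 0"
      using assms(8,10) by (metis not_le)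
    show "AE a in lborel. 0 < a \<longrightarrow> u t a = ubar \<alpha> \<mu> a"
      by (rule age_profile_eq_ubar_if_V_fun_constant[OF that _ nontrivial]) auto
  qed
  moreover have "\<forall>t. V_fun \<beta> \<mu> \<alpha> (u t) = 0" if "\<forall>t. AE a in lborel. 0 < a \<longrightarrow> u t a = ubar \<alpha> \<mu> a"
    using V_fun_eq_0_if_AE_eq_ubar[OF assms(2)] that by blast
  ultimately show ?thesis
    by blast
qed

end
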